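(* Let $\Lambda=G_{K,L}$ be the $K\times L$ open grid with $K,L\ge2$, with its hard-core energy landscape. There exists a path $\omega^*$ from $\mathbf e$ to $\mathbf o$ in $\mathcal X$ such that $\max_{\sigma\in\omega^*}H(\sigma)-H(\mathbf e)=\lceil K/2\rceil+1$.
   Context: Open grid $G_{K,L}$: sites $(v_1,v_2)$ with $0\le v_1\le L-1$, $0\le v_2\le K-1$; $v,w$ adjacent iff $|v_1-w_1|+|v_2-w_2|=1$. Even sites: $v_1+v_2$ even. State space $\mathcal X$ = set of $\sigma\in\{0,1\}^\Lambda$ with $\sigma(v)\sigma(w)=0$ for adjacent $v,w$; $H(\sigma)=-\sum_v\sigma(v)$. A path is a finite sequence of configurations in $\mathcal X$ in which consecutive configurations differ in exactly one site (or coincide). $\mathbf e$ (resp. $\mathbf o$) has particles exactly at the even (resp. odd) sites. *)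

theory Defs
  imports Complex_Main
begin

definition grid :: "nat \<Rightarrow> nat \<Rightarrow> (nat \<times> nat) set" where
  "grid K L = {(v1, v2). v1 < L \<and> v2 < K}"

definition adjacent :: "nat \<times> nat \<Rightarrow> nat \<times> nat \<Rightarrow> bool" where
  "adjacent v w \<longleftrightarrow>
     nat \<bar>int (fst v) - int (fst w)\<bar> + nat \<bar>int (snd v) - int (snd w)\<bar> = 1"

text \<open>A configuration sigma in {0,1}^Lambda is a boolean function on sites,
  required to be False outside Lambda (sigma v = True means a particle at v).\<close>
definition hc_states :: "nat \<Rightarrow> nat \<Rightarrow> (nat \<times> nat \<Rightarrow> bool) set" where
  "hc_states K L = {\<sigma>. (\<forall>v. v \<notin> grid K L \<longrightarrow> \<not> \<sigma> v) \<and>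
      (\<forall>v\<in>grid K L. \<forall>w\<in>grid K L. adjacent v w \<longrightarrow> \<not> (\<sigma> v \<and> \<sigma> w))}"

definition hc_H :: "nat \<Rightarrow> nat \<Rightarrow> (nat \<times> nat \<Rightarrow> bool) \<Rightarrow> int" where
  "hc_H K L \<sigma> = - (\<Sum>v\<in>grid K L. if \<sigma> v then 1 else 0)"

definition even_conf :: "nat \<Rightarrow> nat \<Rightarrow> nat \<times> nat \<Rightarrow> bool" where
  "even_conf K L v \<longleftrightarrow> v \<in> grid K L \<and> even (fst v + snd v)"

definition odd_conf :: "nat \<Rightarrow> nat \<Rightarrow> nat \<times> nat \<Rightarrow> bool" where
  "odd_conf K L v \<longleftrightarrow> v \<in> grid K L \<and> odd (fst v + snd v)"

definition hc_path :: "nat \<Rightarrow> nat \<Rightarrow> (nat \<times> nat \<Rightarrow> bool) list \<Rightarrow> bool" where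
  "hc_path K L \<omega> \<longleftrightarrow> \<omega> \<noteq> [] \<and> set \<omega> \<subseteq> hc_states K L \<and>
     (\<forall>i. Suc i < length \<omega> \<longrightarrow>
        card {v \<in> grid K L. (\<omega> ! i) v \<noteq> (\<omega> ! Suc i) v} \<le> 1)"

end

theory Submission
  imports Defs
begin

text \<open>Enumerate the sites column by column, t = v1 * K + v2, so that the indices of neighbouring
  sites differ by 1 or K, while the sites of index t and t + K have opposite parity. The path sweeps
  through this enumeration: it first removes the even particles of the first column, at cost
  \<lceil>K/2\<rceil>, and then alternately removes the next even particle and adds the next odd one, the
  odd front trailing the even front by at least K positions so that no two particles are ever
  adjacent. Every even particle removed beyond the first column, at index t, is matched by the odd
  particle at index t - K, which is added one step later; so the energy never exceeds
  \<lceil>K/2\<rceil> + 1, and this value is attained when the particle at (1, 1) has just been removed.\<close>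

definition site_index :: "nat \<Rightarrow> nat \<times> nat \<Rightarrow> nat" where
  "site_index K v = fst v * K + snd v"

definition even_index :: "nat \<Rightarrow> nat \<Rightarrow> bool" where
  "even_index K t \<longleftrightarrow> even (t div K + t mod K)"

lemma finite_grid: "finite (grid K L)"
proof -
  have "grid K L \<subseteq> {..<L} \<times> {..<K}" by (auto simp: grid_def)
  then show ?thesis by (rule finite_subset) auto
qed

lemma site_index_div_mod:
  assumes "snd v < K"
  shows "site_index K v div K = fst v" and "site_index K v mod K = snd v"
  using assms by (simp_all add: site_index_def)

lemma site_index_less:
  assumes "v \<in> grid K L"
  shows "site_index K v < K * L"
proof -
  have "fst v + 1 \<le> L" "snd v < K" using assms by (auto simp: grid_def)
  then have "site_index K v < (fst v + 1) * K" by (simp add: site_index_def)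
  also have "\<dots> \<le> L * K" using \<open>fst v + 1 \<le> L\<close> by (rule mult_right_mono) simp
  finally show ?thesis by (simp add: mult.commute)
qed

lemma inj_on_site_index: "inj_on (site_index K) (grid K L)"
proof (rule inj_onI)
  fix v w assume "v \<in> grid K L" "w \<in> grid K L" "site_index K v = site_index K w"
  then show "v = w"
    using site_index_div_mod[of v K] site_index_div_mod[of w K] by (auto simp: grid_def prod_eq_iff)
qed

lemma bij_betw_site_index:
  assumes "0 < K"
  shows "bij_betw (site_index K) (grid K L) {..<K * L}"
proof (rule bij_betw_byWitness[where f' = "\<lambda>t. (t div K, t mod K)"])
  show "\<forall>v\<in>grid K L. (site_index K v div K, site_index K v mod K) = v"
    by (auto simp: grid_def site_index_div_mod)
  show "\<forall>t\<in>{..<K * L}. site_index K (t div K, t mod K) = t"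
    by (simp add: site_index_def)
  show "site_index K ` grid K L \<subseteq> {..<K * L}"
    using site_index_less by blast
  show "(\<lambda>t. (t div K, t mod K)) ` {..<K * L} \<subseteq> grid K L"
    using assms by (auto simp: grid_def less_mult_imp_div_less mult.commute)
qed

lemma card_grid_filter_site_index:
  assumes "0 < K"
  shows "card {v \<in> grid K L. P (site_index K v)} = card {t. t < K * L \<and> P t}"
proof -
  have img: "site_index K ` grid K L = {..<K * L}"
    using bij_betw_site_index[OF assms] by (simp add: bij_betw_def)
  have "site_index K ` {v \<in> grid K L. P (site_index K v)} = {t \<in> site_index K ` grid K L. P t}"
    by auto
  also have "\<dots> = {t. t < K * L \<and> P t}"
    using img by auto
  finally have "site_index K ` {v \<in> grid K L. P (site_index K v)} = {t. t < K * L \<and> P t}" .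
  moreover have "inj_on (site_index K) {v \<in> grid K L. P (site_index K v)}"
    using inj_on_site_index by (rule inj_on_subset) blast
  ultimately show ?thesis by (metis card_image)
qed

lemma even_index_site_index:
  "snd v < K \<Longrightarrow> even_index K (site_index K v) \<longleftrightarrow> even (fst v + snd v)"
  by (simp add: even_index_def site_index_div_mod)

lemma even_index_add_self: "0 < K \<Longrightarrow> even_index K (t + K) \<longleftrightarrow> \<not> even_index K t"
  by (simp add: even_index_def)

lemma adjacent_cases:
  assumes "adjacent v w"
  obtains "fst v = Suc (fst w)" "snd v = snd w" | "fst w = Suc (fst v)" "snd v = snd w"
    | "fst v = fst w" "snd v = Suc (snd w)" | "fst v = fst w" "snd w = Suc (snd v)"
  using assms unfolding adjacent_def by linarith

lemma adjacent_sym: "adjacent v w \<Longrightarrow> adjacent w v"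
  unfolding adjacent_def by linarith

lemma adjacent_even_index:
  assumes "v \<in> grid K L" "w \<in> grid K L" "adjacent v w"
  shows "even_index K (site_index K v) \<longleftrightarrow> \<not> even_index K (site_index K w)"
proof -
  have "snd v < K" "snd w < K" using assms(1,2) by (auto simp: grid_def)
  moreover have "even (fst v + snd v) \<longleftrightarrow> odd (fst w + snd w)"
    using assms(3) by (rule adjacent_cases) simp_all
  ultimately show ?thesis by (simp add: even_index_site_index)
qed

lemma adjacent_site_index_le:
  "0 < K \<Longrightarrow> adjacent v w \<Longrightarrow> site_index K v \<le> site_index K w + K"
  by (erule adjacent_cases) (simp_all add: site_index_def)

definition sweep_conf :: "nat \<Rightarrow> nat \<Rightarrow> nat \<Rightarrow> nat \<Rightarrow> nat \<times> nat \<Rightarrow> bool" where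
  "sweep_conf K L p q v \<longleftrightarrow> v \<in> grid K L \<and>
     (if even_index K (site_index K v) then p \<le> site_index K v else site_index K v < q)"

lemma sweep_conf_in_hc_states:
  assumes "q = 0 \<or> q + K \<le> p"
  shows "sweep_conf K L p q \<in> hc_states K L"
proof -
  have no_pair: "\<not> (sweep_conf K L p q v \<and> sweep_conf K L p q w)"
    if "v \<in> grid K L" "w \<in> grid K L" "adjacent v w" "even_index K (site_index K v)" for v w
  proof
    assume "sweep_conf K L p q v \<and> sweep_conf K L p q w"
    then have "p \<le> site_index K v" "site_index K w < q"
      using that(4) adjacent_even_index[OF that(1-3)] by (simp_all add: sweep_conf_def)
    moreover have "site_index K v \<le> site_index K w + K"
      using that(1,3) by (intro adjacent_site_index_le) (auto simp: grid_def)
    ultimately show False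
      using assms by linarith
  qed
  show ?thesis
    unfolding hc_states_def
  proof (intro CollectI conjI allI impI ballI)
    fix v assume "v \<notin> grid K L"
    then show "\<not> sweep_conf K L p q v" by (simp add: sweep_conf_def)
  next
    fix v w assume vw: "v \<in> grid K L" "w \<in> grid K L" "adjacent v w"
    then show "\<not> (sweep_conf K L p q v \<and> sweep_conf K L p q w)"
      using no_pair[of v w] no_pair[of w v] adjacent_sym adjacent_even_index by blast
  qed
qed

lemma card_grid_site_index_eq_le_1: "card {v \<in> grid K L. site_index K v = s} \<le> 1"
  unfolding One_nat_def
  by (subst card_le_Suc0_iff_eq) (auto simp: finite_grid dest: inj_onD[OF inj_on_site_index])

lemma card_sweep_conf_step_le_1:
  assumes "(p', q') = (Suc p, q) \<or> (p', q') = (p, Suc q)"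
  shows "card {v \<in> grid K L. sweep_conf K L p q v \<noteq> sweep_conf K L p' q' v} \<le> 1"
proof -
  obtain s where "{v \<in> grid K L. sweep_conf K L p q v \<noteq> sweep_conf K L p' q' v}
      \<subseteq> {v \<in> grid K L. site_index K v = s}"
    using assms
  proof (elim disjE)
    assume "(p', q') = (Suc p, q)"
    then show thesis by (intro that[of p]) (auto simp: sweep_conf_def)
  next
    assume "(p', q') = (p, Suc q)"
    then show thesis by (intro that[of q]) (auto simp: sweep_conf_def)
  qed
  then have "card {v \<in> grid K L. sweep_conf K L p q v \<noteq> sweep_conf K L p' q' v}
      \<le> card {v \<in> grid K L. site_index K v = s}"
    by (intro card_mono) (simp_all add: finite_grid)
  then show ?thesis
    using card_grid_site_index_eq_le_1 by (rule order_trans)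
qed

lemma hc_path_map_upt:
  assumes "\<And>n. n \<le> N \<Longrightarrow> f n \<in> hc_states K L"
    and "\<And>n. n < N \<Longrightarrow> card {v \<in> grid K L. f n v \<noteq> f (Suc n) v} \<le> 1"
  shows "hc_path K L (map f [0..<Suc N])"
  unfolding hc_path_def
proof (intro conjI allI impI)
  show "set (map f [0..<Suc N]) \<subseteq> hc_states K L"
    using assms(1) by auto
next
  fix i assume "Suc i < length (map f [0..<Suc N])"
  then show "card {v \<in> grid K L. (map f [0..<Suc N] ! i) v \<noteq> (map f [0..<Suc N] ! Suc i) v} \<le> 1"
    using assms(2)[of i] by (simp del: upt_Suc)
qed simp

lemma sweep_conf_0_0: "sweep_conf K L 0 0 = even_conf K L"
  by (rule ext) (auto simp: sweep_conf_def even_conf_def grid_def even_index_site_index)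

lemma sweep_conf_eq_odd_conf:
  assumes "K * L \<le> p" "K * L \<le> q"
  shows "sweep_conf K L p q = odd_conf K L"
proof
  fix v
  show "sweep_conf K L p q v = odd_conf K L v"
    using site_index_less[of v K L] assms
    by (auto simp: sweep_conf_def odd_conf_def grid_def even_index_site_index)
qed

lemma hc_H_eq_card: "hc_H K L \<sigma> = - int (card {v \<in> grid K L. \<sigma> v})"
  by (simp add: hc_H_def sum.If_cases finite_grid Int_def conj_commute)

definition evens_below :: "nat \<Rightarrow> nat \<Rightarrow> nat \<Rightarrow> nat" where
  "evens_below K L p = card {t. t < K * L \<and> even_index K t \<and> t < p}"

definition odds_below :: "nat \<Rightarrow> nat \<Rightarrow> nat \<Rightarrow> nat" where
  "odds_below K L q = card {t. t < K * L \<and> \<not> even_index K t \<and> t < q}"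

lemma hc_H_sweep_conf:
  assumes "0 < K"
  shows "hc_H K L (sweep_conf K L p q)
    = - int (card {t. t < K * L \<and> (if even_index K t then p \<le> t else t < q)})"
proof -
  have "{v \<in> grid K L. sweep_conf K L p q v}
      = {v \<in> grid K L. if even_index K (site_index K v) then p \<le> site_index K v else site_index K v < q}"
    by (auto simp: sweep_conf_def)
  then show ?thesis
    by (simp only: hc_H_eq_card
        card_grid_filter_site_index[OF assms, of L "\<lambda>t. if even_index K t then p \<le> t else t < q"])
qed

lemma hc_H_sweep_conf_diff:
  assumes "0 < K"
  shows "hc_H K L (sweep_conf K L p q) - hc_H K L (sweep_conf K L 0 0)
    = int (evens_below K L p) - int (odds_below K L q)"
proof -
  let ?evens_above = "card {t. t < K * L \<and> even_index K t \<and> p \<le> t}"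
  have "{t. t < K * L \<and> even_index K t}
      = {t. t < K * L \<and> even_index K t \<and> t < p} \<union> {t. t < K * L \<and> even_index K t \<and> p \<le> t}"
    by auto
  then have full: "card {t. t < K * L \<and> even_index K t} = evens_below K L p + ?evens_above"
    unfolding evens_below_def by (simp add: card_Un_disjoint disjoint_iff)
  have "{t. t < K * L \<and> (if even_index K t then p \<le> t else t < q)}
      = {t. t < K * L \<and> even_index K t \<and> p \<le> t} \<union> {t. t < K * L \<and> \<not> even_index K t \<and> t < q}"
    by auto
  then have swept: "card {t. t < K * L \<and> (if even_index K t then p \<le> t else t < q)}
      = ?evens_above + odds_below K L q"
    unfolding odds_below_def by (simp add: card_Un_disjoint disjoint_iff)
  have "{t. t < K * L \<and> (if even_index K t then 0 \<le> t else t < 0)} = {t. t < K * L \<and> even_index K t}"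
    by auto
  then show ?thesis
    using full swept by (simp only: hc_H_sweep_conf[OF assms])
qed

lemma card_even_below: "card {t. t < n \<and> even t} = (n + 1) div 2"
proof (induction n)
  case (Suc n)
  have "{t. t < Suc n \<and> even t} = (if even n then insert n else id) {t. t < n \<and> even t}"
    by (auto simp: less_Suc_eq)
  then show ?case
    using Suc by simp
qed simp

lemma evens_below_self:
  assumes "0 < L"
  shows "evens_below K L K = (K + 1) div 2"
proof -
  have "K \<le> K * L" using assms by simp
  then have "{t. t < K * L \<and> even_index K t \<and> t < K} = {t. t < K \<and> even t}"
    by (auto simp: even_index_def intro: less_le_trans)
  then show ?thesis by (simp add: evens_below_def card_even_below)
qed

lemma evens_below_mono: "p \<le> p' \<Longrightarrow> evens_below K L p \<le> evens_below K L p'"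
  unfolding evens_below_def by (intro card_mono) auto

lemma odds_below_le_Suc: "a \<le> Suc b \<Longrightarrow> odds_below K L a \<le> odds_below K L b + 1"
proof -
  assume "a \<le> Suc b"
  then have "{t. t < K * L \<and> \<not> even_index K t \<and> t < a}
      \<subseteq> insert b {t. t < K * L \<and> \<not> even_index K t \<and> t < b}"
    by auto
  then have "odds_below K L a \<le> card (insert b {t. t < K * L \<and> \<not> even_index K t \<and> t < b})"
    unfolding odds_below_def by (intro card_mono) auto
  also have "\<dots> \<le> odds_below K L b + 1"
    unfolding odds_below_def by (simp add: card_insert_if)
  finally show ?thesis .
qed

lemma evens_below_add_le:
  assumes "0 < K"
  shows "evens_below K L (K + a) \<le> evens_below K L K + odds_below K L a"
proof -
  let ?low = "{t. t < K * L \<and> even_index K t \<and> t < K}"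
  let ?odd = "{t. t < K * L \<and> \<not> even_index K t \<and> t < a}"
  have "{t. t < K * L \<and> even_index K t \<and> t < K + a} \<subseteq> ?low \<union> (\<lambda>t. t + K) ` ?odd"
  proof
    fix t assume t: "t \<in> {t. t < K * L \<and> even_index K t \<and> t < K + a}"
    show "t \<in> ?low \<union> (\<lambda>t. t + K) ` ?odd"
    proof (cases "t < K")
      case False
      then have "t = (t - K) + K" by simp
      moreover have "t - K \<in> ?odd"
        using t False even_index_add_self[OF assms, of "t - K"] by auto
      ultimately show ?thesis by blast
    qed (use t in simp)
  qed
  then have "evens_below K L (K + a) \<le> card (?low \<union> (\<lambda>t. t + K) ` ?odd)"
    unfolding evens_below_def by (intro card_mono) auto
  also have "\<dots> \<le> card ?low + card ((\<lambda>t. t + K) ` ?odd)"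
    by (rule card_Un_le)
  also have "\<dots> \<le> evens_below K L K + odds_below K L a"
    unfolding evens_below_def odds_below_def by (simp add: card_image_le)
  finally show ?thesis .
qed

lemma ceiling_of_nat_half: "\<lceil>real K / 2\<rceil> = int ((K + 1) div 2)"
proof -
  have "\<lceil>real K / 2\<rceil> = - (- int K div 2)"
    using ceiling_divide_eq_div[of "int K" 2] by simp
  also have "\<dots> = int ((K + 1) div 2)" by presburger
  finally show ?thesis .
qed

definition even_front :: "nat \<Rightarrow> nat \<Rightarrow> nat" where
  "even_front K n = (if n \<le> K then n else K + (n - K + 1) div 2)"

definition odd_front :: "nat \<Rightarrow> nat \<Rightarrow> nat" where
  "odd_front K n = (if n \<le> K then 0 else (n - K) div 2)"

definition sweep :: "nat \<Rightarrow> nat \<Rightarrow> nat \<Rightarrow> nat \<times> nat \<Rightarrow> bool" where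
  "sweep K L n = sweep_conf K L (even_front K n) (odd_front K n)"

lemma fronts_Suc:
  "(even_front K (Suc n), odd_front K (Suc n)) = (Suc (even_front K n), odd_front K n) \<or>
   (even_front K (Suc n), odd_front K (Suc n)) = (even_front K n, Suc (odd_front K n))"
proof (cases "n < K")
  case False
  then obtain m where "n = K + m" using le_Suc_ex not_less by blast
  then show ?thesis
    by (cases "even m") (auto simp: even_front_def odd_front_def Suc_diff_le intro: odd_pos)
qed (simp add: even_front_def odd_front_def)

lemma odd_front_le: "odd_front K n = 0 \<or> odd_front K n + K \<le> even_front K n"
  by (auto simp: even_front_def odd_front_def)

lemma hc_path_sweep: "hc_path K L (map (sweep K L) [0..<Suc N])"
  unfolding sweep_def
  by (intro hc_path_map_upt sweep_conf_in_hc_states odd_front_le card_sweep_conf_step_le_1 fronts_Suc)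

lemma sweep_0: "sweep K L 0 = even_conf K L"
  by (simp add: sweep_def even_front_def odd_front_def sweep_conf_0_0)

lemma sweep_eq_odd_conf:
  assumes "0 < K" "0 < L" "K + 2 * K * L \<le> n"
  shows "sweep K L n = odd_conf K L"
proof -
  have "0 < K * L" using assms(1,2) by simp
  then have "\<not> n \<le> K" using assms(3) by linarith
  with assms(3) show ?thesis
    by (simp add: sweep_def even_front_def odd_front_def sweep_conf_eq_odd_conf)
qed

lemma hc_H_sweep_le:
  assumes "0 < K" "0 < L"
  shows "hc_H K L (sweep K L n) - hc_H K L (even_conf K L) \<le> \<lceil>real K / 2\<rceil> + 1"
proof -
  have "evens_below K L (even_front K n) \<le> evens_below K L K + odds_below K L (odd_front K n) + 1"
  proof (cases "n \<le> K")
    case True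
    then show ?thesis
      using evens_below_mono[of n K K L] by (simp add: even_front_def)
  next
    case False
    define a where "a = (n - K + 1) div 2"
    have "a \<le> Suc (odd_front K n)" using False by (simp add: odd_front_def a_def)
    moreover have "even_front K n = K + a" using False by (simp add: even_front_def a_def)
    ultimately show ?thesis
      using evens_below_add_le[OF assms(1), of L a] odds_below_le_Suc[of a "odd_front K n" K L]
      by simp
  qed
  then show ?thesis
    using hc_H_sweep_conf_diff[OF assms(1)] evens_below_self[OF assms(2)]
    by (simp add: sweep_def sweep_conf_0_0 ceiling_of_nat_half)
qed

lemma hc_H_sweep_K_plus_3:
  assumes "2 \<le> K" "2 \<le> L"
  shows "hc_H K L (sweep K L (K + 3)) - hc_H K L (even_conf K L) = \<lceil>real K / 2\<rceil> + 1"
proof -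
  have "K * 2 \<le> K * L" using assms(2) by simp
  then have "K + 1 < K * L" using assms(1) by linarith
  moreover have "(1 + K) div K = 1" "(1 + K) mod K = 1"
    using assms(1) div_add_self2[of K 1] mod_add_self2[of 1 K]
    by (simp_all del: div_add_self2 mod_add_self2)
  then have "even_index K (K + 1)" "\<not> even_index K K"
    using assms(1) by (simp_all add: even_index_def add.commute)
  ultimately have "{t. t < K * L \<and> even_index K t \<and> t < K + 2}
      = insert (K + 1) {t. t < K * L \<and> even_index K t \<and> t < K}"
    by (auto simp: less_Suc_eq)
  then have "evens_below K L (K + 2) = evens_below K L K + 1"
    by (simp add: evens_below_def)
  moreover have "{t. t < K * L \<and> \<not> even_index K t \<and> t < 1} = {}"
    by (auto simp: even_index_def)
  then have "odds_below K L 1 = 0"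
    by (simp add: odds_below_def)
  moreover have "even_front K (K + 3) = K + 2" "odd_front K (K + 3) = 1"
    by (simp_all add: even_front_def odd_front_def)
  ultimately show ?thesis
    using assms hc_H_sweep_conf_diff[of K L] evens_below_self[of L K]
    by (simp add: sweep_def sweep_conf_0_0 ceiling_of_nat_half)
qed

lemma Max_hc_H_sweep:
  assumes "2 \<le> K" "2 \<le> L" "K + 3 \<le> N"
  shows "Max (hc_H K L ` sweep K L ` {..N}) = hc_H K L (even_conf K L) + (\<lceil>real K / 2\<rceil> + 1)"
proof (rule Max_eqI)
  have "hc_H K L (sweep K L (K + 3)) = hc_H K L (even_conf K L) + (\<lceil>real K / 2\<rceil> + 1)"
    using hc_H_sweep_K_plus_3[OF assms(1,2)] by simp
  then show "hc_H K L (even_conf K L) + (\<lceil>real K / 2\<rceil> + 1) \<in> hc_H K L ` sweep K L ` {..N}"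
    using assms(3) by (metis atMost_iff image_eqI)
next
  fix h assume "h \<in> hc_H K L ` sweep K L ` {..N}"
  then obtain n where "h = hc_H K L (sweep K L n)" by blast
  moreover have "0 < K" "0 < L" using assms by simp_all
  ultimately show "h \<le> hc_H K L (even_conf K L) + (\<lceil>real K / 2\<rceil> + 1)"
    using hc_H_sweep_le[of K L n] by simp
qed simp

theorem proposition5p10:
  fixes K L :: nat
  assumes "K \<ge> 2" and "L \<ge> 2"
  shows "\<exists>\<omega>. hc_path K L \<omega> \<and> hd \<omega> = even_conf K L \<and> last \<omega> = odd_conf K L \<and>
           Max (hc_H K L ` set \<omega>) - hc_H K L (even_conf K L) = \<lceil>real K / 2\<rceil> + 1"
proof -
  define N where "N = K + 2 * K * L"
  define \<omega> where "\<omega> = map (sweep K L) [0..<Suc N]"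
  have "2 * 2 \<le> K * L" using assms by (intro mult_le_mono)
  then have "K + 3 \<le> N" by (simp add: N_def)
  have "set \<omega> = sweep K L ` {..N}"
    by (simp add: \<omega>_def atLeast0AtMost[symmetric] atLeastLessThanSuc_atLeastAtMost del: upt_Suc)
  then have "Max (hc_H K L ` set \<omega>) = hc_H K L (even_conf K L) + (\<lceil>real K / 2\<rceil> + 1)"
    using Max_hc_H_sweep[OF assms \<open>K + 3 \<le> N\<close>] by simp
  moreover have "hc_path K L \<omega>"
    unfolding \<omega>_def by (rule hc_path_sweep)
  moreover have "hd \<omega> = even_conf K L"
    by (simp add: \<omega>_def sweep_0 upt_conv_Cons del: upt_Suc)
  moreover have "last \<omega> = odd_conf K L"
    using assms by (simp add: \<omega>_def N_def sweep_eq_odd_conf)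
  ultimately show ?thesis by auto
qed

end
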